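(* Let $\mathfrak g$ be an $8$-dimensional real nilpotent Lie algebra with a complex structure $J$ for which there is a basis $\{\omega^1,\omega^2,\omega^3,\omega^4\}$ of $(1,0)$-forms satisfying $d\omega^1=0$, $d\omega^2=\varepsilon\,\omega^{1\bar1}$, $d\omega^3=\omega^{14}+\omega^{1\bar4}+a\,\omega^{2\bar1}+i\delta\varepsilon b\,\omega^{1\bar2}$, $d\omega^4=i\nu\,\omega^{1\bar1}+b\,\omega^{2\bar2}+i\delta(\omega^{1\bar3}-\omega^{3\bar1})$, with $\varepsilon=1$, $\delta\in\{1,-1\}$, $\nu\in\{0,1\}$ and real numbers $a>0$, $b\neq0$. Let $\Theta(\delta,\nu,a,b)=\big((a-b)^2-2\delta\nu b\big)\big((a+b)^2-2\delta\nu b\big)$. Then $E_1^{0,2}(\mathfrak g,J)=E_2^{0,2}(\mathfrak g,J)=\langle[\omega^{\bar1\bar2}],[\omega^{\bar1\bar3}],[\omega^{\bar2\bar4}],[\omega^{\bar3\bar4}]\rangle$, and $$E_2^{0,2}(\mathfrak g,J)\neq E_3^{0,2}(\mathfrak g,J)\iff \Theta(\delta,\nu,a,b)\neq0.$$ Moreover, when $\Theta(\delta,\nu,a,b)\neq0$, one has $E_r^{0,2}(\mathfrak g,J)=\langle[\omega^{\bar1\bar2}],[\omega^{\bar1\bar3}],[\omega^{\bar2\bar4}]\rangle$ for every $r\ge3$.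
   Context: Notation: $\omega^{jk}=\omega^j\wedge\omega^k$, $\omega^{j\bar k}=\omega^j\wedge\overline{\omega^k}$, $\omega^{\bar j\bar k}=\overline{\omega^j}\wedge\overline{\omega^k}$. For a Lie algebra $\mathfrak g$ with integrable complex structure $J$, $E_r^{p,q}(\mathfrak g,J)$ is the $r$-th page in bidegree $(p,q)$ of the Frölicher spectral sequence of the double complex $(\Lambda^{*,*}(\mathfrak g,J),\partial,\bar\partial)$ of (complex) forms on $\mathfrak g$ of bidegree $(p,q)$ with respect to $J$, where $d=\partial+\bar\partial$ is the Chevalley–Eilenberg differential; $E_1^{p,q}$ is the $\bar\partial$-cohomology and $d_r$ has bidegree $(r,1-r)$. *)

theory Defs
  imports Complex_Main
begin

text \<open>Concrete model of the complexified Chevalley--Eilenberg complex of the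
8-dimensional Lie algebra given by the structure equations.
Generators: index k-1 stands for omega^k (k=1..4), index k+3 stands for the
conjugate form omega^{bar k}.  A (complex) form is a coefficient function on
finite subsets S of {0..<8}; the subset S = {s1<...<sm} represents the monomial
e_{s1} wedge ... wedge e_{sm}.\<close>

type_synonym form = "nat set \<Rightarrow> complex"

definition fzero :: form where "fzero = (\<lambda>_. 0)"
definition fadd :: "form \<Rightarrow> form \<Rightarrow> form" where "fadd \<alpha> \<beta> = (\<lambda>S. \<alpha> S + \<beta> S)"
definition fscale :: "complex \<Rightarrow> form \<Rightarrow> form" where "fscale c \<alpha> = (\<lambda>S. c * \<alpha> S)"

definition mono :: "nat set \<Rightarrow> form" where "mono T = (\<lambda>S. if S = T then 1 else 0)"
definition gen :: "nat \<Rightarrow> form" where "gen i = mono {i}"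

text \<open>sign of e_S wedge e_T = wsign S T * e_(S union T) for disjoint S, T\<close>
definition wsign :: "nat set \<Rightarrow> nat set \<Rightarrow> complex" where
  "wsign S T = (-1) ^ card {(s,t). s \<in> S \<and> t \<in> T \<and> t < s}"

definition wedge :: "form \<Rightarrow> form \<Rightarrow> form" where
  "wedge \<alpha> \<beta> = (\<lambda>U. \<Sum>S\<in>Pow U. wsign S (U - S) * \<alpha> S * \<beta> (U - S))"

definition w2 :: "nat \<Rightarrow> nat \<Rightarrow> form" where "w2 j k = wedge (gen j) (gen k)"

definition barix :: "nat \<Rightarrow> nat" where "barix i = (if i < 4 then i + 4 else i - 4)"
definition wedge_list :: "nat list \<Rightarrow> form" where
  "wedge_list is = foldr (\<lambda>i \<beta>. wedge (gen i) \<beta>) is (mono {})"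
definition cconj :: "form \<Rightarrow> form" where
  "cconj \<alpha> = (\<lambda>U. \<Sum>S\<in>Pow {..<8}. cnj (\<alpha> S) * wedge_list (map barix (sorted_list_of_set S)) U)"

definition struct_eq :: "real \<Rightarrow> real \<Rightarrow> real \<Rightarrow> real \<Rightarrow> real \<Rightarrow> nat \<Rightarrow> form" where
  "struct_eq \<epsilon> \<delta> \<nu> a b j = (let
     d1 = fzero;
     d2 = fscale (of_real \<epsilon>) (w2 0 4);
     d3 = fadd (w2 0 3) (fadd (w2 0 7) (fadd (fscale (of_real a) (w2 1 4))
             (fscale (\<i> * of_real (\<delta> * \<epsilon> * b)) (w2 0 5))));
     d4 = fadd (fscale (\<i> * of_real \<nu>) (w2 0 4)) (fadd (fscale (of_real b) (w2 1 5))
             (fscale (\<i> * of_real \<delta>) (fadd (w2 0 6) (fscale (-1) (w2 2 4)))));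
     dh = (\<lambda>k. if k = 0 then d1 else if k = 1 then d2 else if k = 2 then d3 else d4)
   in if j < 4 then dh j else if j < 8 then cconj (dh (j - 4)) else fzero)"

text \<open>Extension of d to all forms as an antiderivation:
 d(e_S) = sum_{j in S} (-1)^{#{i in S, i<j}} d(e_j) wedge e_{S-{j}}.\<close>
definition dmono :: "(nat \<Rightarrow> form) \<Rightarrow> nat set \<Rightarrow> form" where
  "dmono dg S = (\<lambda>U. \<Sum>j\<in>S. (-1) ^ card {i\<in>S. i < j} * wedge (dg j) (mono (S - {j})) U)"

definition dform :: "(nat \<Rightarrow> form) \<Rightarrow> form \<Rightarrow> form" where
  "dform dg \<alpha> = (\<lambda>U. \<Sum>S\<in>Pow {..<8}. \<alpha> S * dmono dg S U)"

definition nunb :: "nat set \<Rightarrow> nat" where "nunb S = card (S \<inter> {..<4})"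
definition nbar :: "nat set \<Rightarrow> nat" where "nbar S = card (S \<inter> {4..<8})"

definition del :: "(nat \<Rightarrow> form) \<Rightarrow> form \<Rightarrow> form" where
  "del dg \<alpha> = (\<lambda>U. \<Sum>S\<in>Pow {..<8}.
      if nunb U = nunb S + 1 \<and> nbar U = nbar S then \<alpha> S * dmono dg S U else 0)"
definition dbar :: "(nat \<Rightarrow> form) \<Rightarrow> form \<Rightarrow> form" where
  "dbar dg \<alpha> = (\<lambda>U. \<Sum>S\<in>Pow {..<8}.
      if nunb U = nunb S \<and> nbar U = nbar S + 1 then \<alpha> S * dmono dg S U else 0)"

text \<open>forms of bidegree (p,q) (the zero space for negative p or q)\<close>
definition Aform :: "int \<Rightarrow> int \<Rightarrow> form set" where
  "Aform p q = {\<alpha>. \<forall>S. \<alpha> S \<noteq> 0 \<longrightarrow> S \<subseteq> {..<8} \<and> int (nunb S) = p \<and> int (nbar S) = q}"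

text \<open>Frolicher spectral sequence, r >= 1: E_r^{p,q} = Zr r p q / Br r p q
 (the standard zig-zag description of the pages).\<close>
definition Zr :: "(nat \<Rightarrow> form) \<Rightarrow> nat \<Rightarrow> int \<Rightarrow> int \<Rightarrow> form set" where
  "Zr dg r p q = {\<alpha> \<in> Aform p q. dbar dg \<alpha> = fzero \<and>
     (\<exists>xs. length xs = r - 1 \<and>
        (\<forall>i<r-1. xs ! i \<in> Aform (p + int i + 1) (q - int i - 1)) \<and>
        (\<forall>i<r-1. fadd (del dg ((\<alpha> # xs) ! i)) (dbar dg (xs ! i)) = fzero))}"

definition Br :: "(nat \<Rightarrow> form) \<Rightarrow> nat \<Rightarrow> int \<Rightarrow> int \<Rightarrow> form set" where
  "Br dg r p q = {fadd (if r \<ge> 2 then del dg (hd bs) else fzero) (dbar dg \<gamma>) | \<gamma> bs.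
     \<gamma> \<in> Aform p (q - 1) \<and> length bs = r - 1 \<and>
     (\<forall>i<r-1. bs ! i \<in> Aform (p - 1 - int i) (q + int i)) \<and>
     (\<forall>i. i + 1 < r - 1 \<longrightarrow> fadd (dbar dg (bs ! i)) (del dg (bs ! (i + 1))) = fzero) \<and>
     (r \<ge> 2 \<longrightarrow> dbar dg (bs ! (r - 2)) = fzero)}"

definition lincomb :: "complex list \<Rightarrow> form list \<Rightarrow> form" where
  "lincomb cs vs = (\<lambda>S. \<Sum>i<length vs. cs ! i * (vs ! i) S)"

definition Epage_spanned :: "(nat \<Rightarrow> form) \<Rightarrow> nat \<Rightarrow> int \<Rightarrow> int \<Rightarrow> form list \<Rightarrow> bool" where
  "Epage_spanned dg r p q vs \<longleftrightarrow> set vs \<subseteq> Zr dg r p q \<and>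
     (\<forall>\<alpha>\<in>Zr dg r p q. \<exists>cs \<beta>. length cs = length vs \<and> \<beta> \<in> Br dg r p q \<and> \<alpha> = fadd (lincomb cs vs) \<beta>)"

text \<open>E_r^{p,q} = E_s^{p,q} (the intermediate differentials vanish at (p,q))\<close>
definition Epage_eq :: "(nat \<Rightarrow> form) \<Rightarrow> nat \<Rightarrow> nat \<Rightarrow> int \<Rightarrow> int \<Rightarrow> bool" where
  "Epage_eq dg r s p q \<longleftrightarrow> Zr dg r p q = Zr dg s p q \<and> Br dg r p q = Br dg s p q"

end

theory Submission
  imports Defs
begin

text \<open>Since p = 0, every boundary space \<open>B\<^sub>r\<close> in bidegree (0,2) is the image of \<partial>-bar on (0,1)-forms,
spanned by omega^{bar1 bar4} = \<partial>-bar omega^{bar3}. A \<partial>-bar-closed (0,2)-form has no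
omega^{bar2 bar3} component, and each of omega^{bar1 bar2}, omega^{bar1 bar3}, omega^{bar2 bar4},
omega^{bar3 bar4} starts a zig-zag of length 2, so \<open>E\<^sub>1 = E\<^sub>2\<close>. The first three even start zig-zags
that stop, so they survive to every page. For omega^{bar3 bar4}, comparing coefficients in the
zig-zag equations shows that a zig-zag of length 3 exists exactly when \<open>K\<^sup>2 = 4a\<^sup>2b\<^sup>2\<close>, where
\<open>K = a\<^sup>2 + b\<^sup>2 - 2\<delta>\<nu>b\<close>. As \<open>\<Theta> = (K - 2ab)(K + 2ab)\<close>, this is the condition \<open>\<Theta> = 0\<close>.\<close>

section \<open>Forms as lists of terms\<close>

type_synonym terms = "(complex \<times> nat list) list"

text \<open>A copy of \<^const>\<open>set\<close> that the simplifier leaves alone, so that monomials keep their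
list form during computations.\<close>
definition key_set :: "nat list \<Rightarrow> nat set" where "key_set k = set k"

fun form_of :: "terms \<Rightarrow> form" where
  "form_of [] = fzero"
| "form_of (t # ts) = fadd (fscale (fst t) (mono (key_set (snd t)))) (form_of ts)"

definition scale_terms :: "complex \<Rightarrow> terms \<Rightarrow> terms" where
  "scale_terms c ts = map (\<lambda>t. (c * fst t, snd t)) ts"

definition coeff_of :: "terms \<Rightarrow> nat list \<Rightarrow> complex" where
  "coeff_of ts k = (\<Sum>t\<leftarrow>ts. if snd t = k then fst t else 0)"

definition sorted_keys :: "terms \<Rightarrow> bool" where
  "sorted_keys ts \<longleftrightarrow> (\<forall>t\<in>set ts. sorted_wrt (<) (snd t))"

lemma fadd_fzero_left: "fadd fzero \<alpha> = \<alpha>"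
  by (simp add: fadd_def fzero_def)

lemma fadd_fzero_right: "fadd \<alpha> fzero = \<alpha>"
  by (simp add: fadd_def fzero_def)

lemma fscale_fscale: "fscale c (fscale d \<alpha>) = fscale (c * d) \<alpha>"
  by (simp add: fscale_def fun_eq_iff)

lemma fscale_fzero: "fscale c fzero = fzero"
  by (simp add: fscale_def fzero_def)

lemma fzero_apply: "F = fzero \<Longrightarrow> F U = 0"
  by (simp add: fzero_def)

lemma form_of_apply: "form_of ts U = (\<Sum>t\<leftarrow>ts. fst t * mono (key_set (snd t)) U)"
  by (induction ts) (auto simp: fzero_def fadd_def fscale_def)

lemma form_of_append: "form_of (ts @ us) = fadd (form_of ts) (form_of us)"
  by (rule ext) (simp add: form_of_apply fadd_def)

lemma form_of_scale_terms: "form_of (scale_terms c ts) = fscale c (form_of ts)"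
  by (rule ext) (simp add: form_of_apply fscale_def scale_terms_def sum_list_const_mult o_def mult.assoc)

lemma form_of_Cons: "form_of ((c, k) # ts) = fadd (fscale c (form_of [(1, k)])) (form_of ts)"
  by (simp add: fscale_def fadd_def fzero_def fun_eq_iff)

lemma key_set_eq_iff: "sorted_wrt (<) k \<Longrightarrow> sorted_wrt (<) l \<Longrightarrow> key_set k = key_set l \<longleftrightarrow> k = l"
  unfolding key_set_def by (metis strict_sorted_equal)

lemma form_of_key: "sorted_keys ts \<Longrightarrow> sorted_wrt (<) k \<Longrightarrow> form_of ts (key_set k) = coeff_of ts k"
  unfolding sorted_keys_def coeff_of_def form_of_apply
  by (induction ts) (auto simp: mono_def key_set_eq_iff)

lemma form_of_off_keys: "(\<forall>t\<in>set ts. U \<noteq> key_set (snd t)) \<Longrightarrow> form_of ts U = 0"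
  unfolding form_of_apply by (induction ts) (auto simp: mono_def)

lemma form_of_eq_fzero:
  assumes "sorted_keys ts" and "\<forall>t\<in>set ts. coeff_of ts (snd t) = 0"
  shows "form_of ts = fzero"
proof (rule ext)
  fix U
  show "form_of ts U = fzero U"
  proof (cases "\<exists>t\<in>set ts. U = key_set (snd t)")
    case True
    then obtain t where t: "t \<in> set ts" "U = key_set (snd t)" by blast
    then have "form_of ts U = coeff_of ts (snd t)"
      using assms(1) form_of_key by (auto simp: sorted_keys_def)
    then show ?thesis using assms(2) t by (simp add: fzero_def)
  next
    case False
    then show ?thesis using form_of_off_keys by (auto simp: fzero_def)
  qed
qed

lemma coeff_of_append: "coeff_of (ts @ us) k = coeff_of ts k + coeff_of us k"
  by (simp add: coeff_of_def)

lemma coeff_of_scale_terms: "coeff_of (scale_terms c ts) k = c * coeff_of ts k"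
  unfolding coeff_of_def scale_terms_def by (induction ts) (auto simp: algebra_simps)

lemma form_of_eqI:
  assumes "sorted_keys ts" "sorted_keys us"
    and "\<forall>t\<in>set (ts @ us). coeff_of ts (snd t) = coeff_of us (snd t)"
  shows "form_of ts = form_of us"
proof -
  let ?diff = "ts @ scale_terms (-1) us"
  have keys: "snd ` set ?diff = snd ` set (ts @ us)"
    by (force simp: scale_terms_def)
  have "\<forall>t\<in>set ?diff. coeff_of ?diff (snd t) = 0"
  proof
    fix t assume "t \<in> set ?diff"
    then obtain u where "u \<in> set (ts @ us)" "snd t = snd u"
      using keys by (metis image_iff)
    then show "coeff_of ?diff (snd t) = 0"
      using assms(3) by (simp add: coeff_of_append coeff_of_scale_terms)
  qed
  moreover have "sorted_keys ?diff"
    using assms(1,2) by (auto simp: sorted_keys_def scale_terms_def)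
  ultimately have "form_of ?diff = fzero"
    by (rule form_of_eq_fzero[rotated])
  then have "\<And>U. form_of ts U + (-1) * form_of us U = 0"
    by (metis form_of_append form_of_scale_terms fadd_def fscale_def fzero_def)
  then show ?thesis by (intro ext) (simp add: algebra_simps)
qed

lemma wedge_fadd_left: "wedge (fadd \<alpha> \<beta>) \<gamma> = fadd (wedge \<alpha> \<gamma>) (wedge \<beta> \<gamma>)"
  by (rule ext) (simp add: wedge_def fadd_def algebra_simps sum.distrib)

lemma wedge_fadd_right: "wedge \<gamma> (fadd \<alpha> \<beta>) = fadd (wedge \<gamma> \<alpha>) (wedge \<gamma> \<beta>)"
  by (rule ext) (simp add: wedge_def fadd_def algebra_simps sum.distrib)

lemma wedge_fscale_left: "wedge (fscale c \<alpha>) \<beta> = fscale c (wedge \<alpha> \<beta>)"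
  by (rule ext) (simp add: wedge_def fscale_def algebra_simps sum_distrib_left)

lemma wedge_fscale_right: "wedge \<alpha> (fscale c \<beta>) = fscale c (wedge \<alpha> \<beta>)"
  by (rule ext) (simp add: wedge_def fscale_def algebra_simps sum_distrib_left)

lemma wedge_fzero_left: "wedge fzero \<beta> = fzero"
  by (rule ext) (simp add: wedge_def fzero_def)

lemma wedge_fzero_right: "wedge \<beta> fzero = fzero"
  by (rule ext) (simp add: wedge_def fzero_def)

lemma wedge_mono_mono:
  assumes "finite S" "finite T"
  shows "wedge (mono S) (mono T) = (if S \<inter> T = {} then fscale (wsign S T) (mono (S \<union> T)) else fzero)"
proof (rule ext)
  fix U
  show "wedge (mono S) (mono T) U = (if S \<inter> T = {} then fscale (wsign S T) (mono (S \<union> T)) else fzero) U"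
  proof (cases "finite U")
    case True
    have "wedge (mono S) (mono T) U = (\<Sum>S'\<in>Pow U. if S' = S then wsign S (U - S) * mono T (U - S) else 0)"
      unfolding wedge_def by (intro sum.cong) (auto simp: mono_def)
    also have "\<dots> = (if S \<subseteq> U then wsign S (U - S) * mono T (U - S) else 0)"
      using True by (simp add: sum.delta')
    also have "\<dots> = (if S \<inter> T = {} then fscale (wsign S T) (mono (S \<union> T)) else fzero) U"
    proof -
      have "(S \<subseteq> U \<and> U - S = T) \<longleftrightarrow> (S \<inter> T = {} \<and> U = S \<union> T)" by blast
      then show ?thesis by (auto simp: mono_def fscale_def fzero_def)
    qed
    finally show ?thesis .
  next
    case False
    then have "wedge (mono S) (mono T) U = 0" by (simp add: wedge_def)
    moreover have "U \<noteq> S \<union> T" using False assms by auto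
    ultimately show ?thesis by (simp add: mono_def fscale_def fzero_def)
  qed
qed

lemma wsign_key_set:
  assumes "distinct k" "distinct l"
  shows "wsign (key_set k) (key_set l) = (-1) ^ length (filter (\<lambda>(s,t). t < s) (List.product k l))"
proof -
  have "{(s,t). s \<in> set k \<and> t \<in> set l \<and> t < s} = set (filter (\<lambda>(s,t). t < s) (List.product k l))"
    by auto
  moreover have "distinct (filter (\<lambda>(s,t). t < s) (List.product k l))"
    using assms by (simp add: distinct_product)
  ultimately show ?thesis unfolding wsign_def key_set_def by (metis distinct_card)
qed

lemma key_set_disjoint_iff: "key_set k \<inter> key_set l = {} \<longleftrightarrow> list_all (\<lambda>x. x \<notin> set l) k"
  by (auto simp: key_set_def list_all_iff)

lemma key_set_union: "key_set k \<union> key_set l = key_set (sort (k @ l))"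
  by (simp add: key_set_def)

fun wedge_term :: "complex \<times> nat list \<Rightarrow> terms \<Rightarrow> terms" where
  "wedge_term t [] = []"
| "wedge_term t (u # us) = (if key_set (snd t) \<inter> key_set (snd u) = {}
      then [(fst t * fst u * wsign (key_set (snd t)) (key_set (snd u)), sort (snd t @ snd u))]
      else []) @ wedge_term t us"

fun wedge_terms :: "terms \<Rightarrow> terms \<Rightarrow> terms" where
  "wedge_terms [] us = []"
| "wedge_terms (t # ts) us = wedge_term t us @ wedge_terms ts us"

lemma form_of_wedge_term:
  "wedge (fscale (fst t) (mono (key_set (snd t)))) (form_of us) = form_of (wedge_term t us)"
proof (induction us)
  case Nil
  then show ?case by (simp add: wedge_fzero_right)
next
  case (Cons u us)
  have "finite (key_set k)" for k by (simp add: key_set_def)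
  then show ?case
    using Cons by (simp add: wedge_fadd_right wedge_fscale_right wedge_fscale_left wedge_mono_mono
        form_of_append fscale_fscale fscale_fzero fadd_fzero_left fadd_fzero_right key_set_union
        mult.commute mult.left_commute)
qed

lemma form_of_wedge_terms: "wedge (form_of ts) (form_of us) = form_of (wedge_terms ts us)"
  by (induction ts) (simp_all add: wedge_fzero_left wedge_fadd_left form_of_wedge_term form_of_append)

lemma cconj_fadd: "cconj (fadd \<alpha> \<beta>) = fadd (cconj \<alpha>) (cconj \<beta>)"
  by (rule ext) (simp add: cconj_def fadd_def algebra_simps sum.distrib)

lemma cconj_fscale: "cconj (fscale c \<alpha>) = fscale (cnj c) (cconj \<alpha>)"
  by (rule ext) (simp add: cconj_def fscale_def algebra_simps sum_distrib_left)

lemma cconj_fzero: "cconj fzero = fzero"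
  by (rule ext) (simp add: cconj_def fzero_def)

lemma cconj_mono:
  "cconj (mono T) = (if T \<subseteq> {..<8} then wedge_list (map barix (sorted_list_of_set T)) else fzero)"
proof (rule ext)
  fix U
  have "cconj (mono T) U =
      (\<Sum>S\<in>Pow {..<8}. if S = T then wedge_list (map barix (sorted_list_of_set S)) U else 0)"
    unfolding cconj_def by (intro sum.cong) (auto simp: mono_def)
  also have "\<dots> = (if T \<subseteq> {..<8} then wedge_list (map barix (sorted_list_of_set T)) else fzero) U"
    by (simp add: sum.delta' fzero_def)
  finally show "cconj (mono T) U = \<dots>" .
qed

fun wedge_list_terms :: "nat list \<Rightarrow> terms" where
  "wedge_list_terms [] = [(1, [])]"
| "wedge_list_terms (i # is) = wedge_terms [(1, [i])] (wedge_list_terms is)"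

lemma form_of_wedge_list_terms: "wedge_list is = form_of (wedge_list_terms is)"
proof (induction "is")
  case Nil
  have "mono {} = form_of [(1, [])]" by (simp add: key_set_def fadd_fzero_right fscale_def)
  then show ?case by (simp add: wedge_list_def del: form_of.simps)
next
  case (Cons i "is")
  have "gen i = form_of [(1, [i])]" by (simp add: gen_def key_set_def fadd_fzero_right fscale_def)
  then show ?case
    using Cons by (simp add: wedge_list_def form_of_wedge_terms del: form_of.simps wedge_terms.simps)
qed

fun cconj_terms :: "terms \<Rightarrow> terms" where
  "cconj_terms [] = []"
| "cconj_terms (t # ts) = scale_terms (cnj (fst t)) (wedge_list_terms (map barix (snd t))) @ cconj_terms ts"

lemma sorted_list_of_key_set: "sorted_wrt (<) k \<Longrightarrow> sorted_list_of_set (key_set k) = k"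
  unfolding key_set_def by (simp add: strict_sorted_iff sorted_list_of_set.idem_if_sorted_distinct)

lemma form_of_cconj_terms:
  "\<forall>t\<in>set ts. sorted_wrt (<) (snd t) \<and> list_all (\<lambda>i. i < 8) (snd t) \<Longrightarrow>
    cconj (form_of ts) = form_of (cconj_terms ts)"
proof (induction ts)
  case Nil
  then show ?case by (simp add: cconj_fzero)
next
  case (Cons t ts)
  have "key_set (snd t) \<subseteq> {..<8}" using Cons.prems by (auto simp: key_set_def list_all_iff)
  then show ?case
    using Cons by (simp add: cconj_fadd cconj_fscale cconj_mono sorted_list_of_key_set
        form_of_wedge_list_terms form_of_append form_of_scale_terms)
qed

lemma w2_form_of: "w2 j k = form_of (wedge_terms [(1,[j])] [(1,[k])])"
proof -
  have "gen i = form_of [(1, [i])]" for i by (simp add: gen_def key_set_def fadd_fzero_right fscale_def)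
  then show ?thesis unfolding w2_def by (simp only: form_of_wedge_terms)
qed

lemma w2_eq_form_of: "j < k \<Longrightarrow> w2 j k = form_of [(1, [j,k])]"
  by (simp add: w2_form_of key_set_disjoint_iff wsign_key_set del: form_of.simps)

lemma lincomb_Cons: "lincomb (c # cs) (v # vs) = fadd (fscale c v) (lincomb cs vs)"
  by (simp add: lincomb_def fadd_def fscale_def fun_eq_iff lessThan_Suc_eq_insert_0 sum.reindex)

lemma lincomb_Nil: "lincomb [] [] = fzero"
  by (simp add: lincomb_def fzero_def)

lemma form_of_concat_map: "form_of (concat (map f xs)) = (\<lambda>U. \<Sum>j\<leftarrow>xs. form_of (f j) U)"
  by (induction xs) (simp_all add: form_of_append fadd_def fzero_def)

definition dmono_terms :: "(nat \<Rightarrow> terms) \<Rightarrow> nat list \<Rightarrow> terms" where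
  "dmono_terms G k = concat (map (\<lambda>j. scale_terms ((-1) ^ length (filter (\<lambda>i. i < j) k))
      (wedge_terms (G j) [(1, remove1 j k)])) k)"

lemma dmono_form_of:
  assumes "distinct k"
  shows "dmono (\<lambda>j. form_of (G j)) (key_set k) = form_of (dmono_terms G k)"
proof
  fix U
  have card_less: "card {i \<in> set k. i < j} = length (filter (\<lambda>i. i < j) k)" for j
  proof -
    have "{i \<in> set k. i < j} = set (filter (\<lambda>i. i < j) k)" by auto
    then show ?thesis using assms by (metis distinct_card distinct_filter)
  qed
  have mono_remove: "mono (set k - {j}) = form_of [(1, remove1 j k)]" for j
    using assms by (simp add: key_set_def fadd_fzero_right fscale_def)
  have "dmono (\<lambda>j. form_of (G j)) (key_set k) U =
      (\<Sum>j\<leftarrow>k. (-1) ^ card {i \<in> set k. i < j} * wedge (form_of (G j)) (mono (set k - {j})) U)"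
    unfolding dmono_def key_set_def using assms by (simp add: sum_list_distinct_conv_sum_set)
  also have "\<dots> = (\<Sum>j\<leftarrow>k. form_of (scale_terms ((-1) ^ length (filter (\<lambda>i. i < j) k))
      (wedge_terms (G j) [(1, remove1 j k)])) U)"
    by (simp add: card_less mono_remove form_of_scale_terms fscale_def form_of_wedge_terms del: form_of.simps)
  finally show "dmono (\<lambda>j. form_of (G j)) (key_set k) U = form_of (dmono_terms G k) U"
    by (simp add: dmono_terms_def form_of_concat_map)
qed

definition d_component :: "(nat set \<Rightarrow> nat set \<Rightarrow> bool) \<Rightarrow> (nat \<Rightarrow> form) \<Rightarrow> form \<Rightarrow> form" where
  "d_component c dg \<alpha> = (\<lambda>U. \<Sum>S\<in>Pow {..<8}. if c U S then \<alpha> S * dmono dg S U else 0)"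

definition shift10 :: "nat set \<Rightarrow> nat set \<Rightarrow> bool" where
  "shift10 U S \<longleftrightarrow> nunb U = nunb S + 1 \<and> nbar U = nbar S"

definition shift01 :: "nat set \<Rightarrow> nat set \<Rightarrow> bool" where
  "shift01 U S \<longleftrightarrow> nunb U = nunb S \<and> nbar U = nbar S + 1"

lemma del_eq_d_component: "del dg = d_component shift10 dg"
  by (rule ext) (simp add: del_def d_component_def shift10_def)

lemma dbar_eq_d_component: "dbar dg = d_component shift01 dg"
  by (rule ext) (simp add: dbar_def d_component_def shift01_def)

lemma d_component_fadd: "d_component c dg (fadd \<alpha> \<beta>) = fadd (d_component c dg \<alpha>) (d_component c dg \<beta>)"
  by (rule ext) (simp add: d_component_def fadd_def algebra_simps sum.distrib
      if_distrib[of "\<lambda>x. x + _"] sum.If_cases)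

lemma d_component_fscale: "d_component c dg (fscale k \<alpha>) = fscale k (d_component c dg \<alpha>)"
  unfolding d_component_def fscale_def
  by (rule ext) (simp add: sum_distrib_left, intro sum.cong, auto)

lemma d_component_fzero: "d_component c dg fzero = fzero"
  unfolding d_component_def fzero_def by (rule ext) (intro sum.neutral, auto)

lemma d_component_mono:
  "d_component c dg (mono T) = (\<lambda>U. if T \<subseteq> {..<8} \<and> c U T then dmono dg T U else 0)"
proof
  fix U
  have "d_component c dg (mono T) U =
      (\<Sum>S\<in>Pow {..<8}. if S = T then (if c U T then dmono dg T U else 0) else 0)"
    unfolding d_component_def by (intro sum.cong) (auto simp: mono_def)
  then show "d_component c dg (mono T) U = (if T \<subseteq> {..<8} \<and> c U T then dmono dg T U else 0)"
    by (simp add: sum.delta')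
qed

lemma form_of_filter: "(if P U then form_of ts U else 0) = form_of (filter (\<lambda>t. P (key_set (snd t))) ts) U"
  by (induction ts) (auto simp: fadd_def fscale_def fzero_def mono_def)

definition d_component_terms ::
  "(nat set \<Rightarrow> nat set \<Rightarrow> bool) \<Rightarrow> (nat \<Rightarrow> terms) \<Rightarrow> terms \<Rightarrow> terms" where
  "d_component_terms c G ts = concat (map (\<lambda>t. if list_all (\<lambda>i. i < 8) (snd t)
      then scale_terms (fst t) (filter (\<lambda>u. c (key_set (snd u)) (key_set (snd t))) (dmono_terms G (snd t)))
      else []) ts)"

lemma d_component_form_of:
  "\<forall>t\<in>set ts. distinct (snd t) \<Longrightarrow>
    d_component c (\<lambda>j. form_of (G j)) (form_of ts) = form_of (d_component_terms c G ts)"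
proof (induction ts)
  case Nil
  then show ?case by (simp add: d_component_terms_def d_component_fzero)
next
  case (Cons t ts)
  have dist: "distinct (snd t)" using Cons.prems by simp
  let ?head = "if list_all (\<lambda>i. i < 8) (snd t)
      then scale_terms (fst t) (filter (\<lambda>u. c (key_set (snd u)) (key_set (snd t))) (dmono_terms G (snd t)))
      else []"
  have head: "d_component c (\<lambda>j. form_of (G j)) (fscale (fst t) (mono (key_set (snd t)))) = form_of ?head"
  proof
    fix U
    have "d_component c (\<lambda>j. form_of (G j)) (fscale (fst t) (mono (key_set (snd t)))) U =
        fst t * (if key_set (snd t) \<subseteq> {..<8}
          then (if c U (key_set (snd t)) then form_of (dmono_terms G (snd t)) U else 0) else 0)"
      by (simp only: d_component_fscale d_component_mono dmono_form_of[OF dist]) (simp add: fscale_def)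
    also have "\<dots> = form_of ?head U"
      by (subst form_of_filter[where P = "\<lambda>U. c U (key_set (snd t))"])
        (auto simp: key_set_def list_all_iff form_of_scale_terms fscale_def fzero_def)
    finally show "d_component c (\<lambda>j. form_of (G j)) (fscale (fst t) (mono (key_set (snd t)))) U =
        form_of ?head U" .
  qed
  have "d_component_terms c G (t # ts) = ?head @ d_component_terms c G ts"
    by (simp add: d_component_terms_def)
  then show ?case
    using Cons head by (simp only: form_of.simps(2) d_component_fadd form_of_append) simp
qed

lemma nunb_key_set: "distinct k \<Longrightarrow> nunb (key_set k) = length (filter (\<lambda>i. i < 4) k)"
proof -
  assume "distinct k"
  moreover have "key_set k \<inter> {..<4} = set (filter (\<lambda>i. i < 4) k)" by (auto simp: key_set_def)
  ultimately show ?thesis unfolding nunb_def by (metis distinct_card distinct_filter)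
qed

lemma nbar_key_set: "distinct k \<Longrightarrow> nbar (key_set k) = length (filter (\<lambda>i. 4 \<le> i \<and> i < 8) k)"
proof -
  assume "distinct k"
  moreover have "key_set k \<inter> {4..<8} = set (filter (\<lambda>i. 4 \<le> i \<and> i < 8) k)" by (auto simp: key_set_def)
  ultimately show ?thesis unfolding nbar_def by (metis distinct_card distinct_filter)
qed

lemma del_form_of:
  "\<forall>t\<in>set ts. distinct (snd t) \<Longrightarrow>
    del (\<lambda>j. form_of (G j)) (form_of ts) = form_of (d_component_terms shift10 G ts)"
  by (simp add: del_eq_d_component d_component_form_of del: form_of.simps)

lemma dbar_form_of:
  "\<forall>t\<in>set ts. distinct (snd t) \<Longrightarrow>
    dbar (\<lambda>j. form_of (G j)) (form_of ts) = form_of (d_component_terms shift01 G ts)"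
  by (simp add: dbar_eq_d_component d_component_form_of del: form_of.simps)

fun increasing_lists :: "nat \<Rightarrow> nat list list" where
  "increasing_lists 0 = [[]]"
| "increasing_lists (Suc n) = increasing_lists n @ map (\<lambda>k. k @ [n]) (increasing_lists n)"

lemma increasing_lists_sorted:
  "k \<in> set (increasing_lists n) \<Longrightarrow> sorted_wrt (<) k \<and> set k \<subseteq> {..<n}"
proof (induction n arbitrary: k)
  case 0
  then show ?case by simp
next
  case (Suc n)
  then show ?case by (auto simp: sorted_wrt_append) fastforce+
qed

lemma increasing_lists_complete: "S \<subseteq> {..<n} \<Longrightarrow> \<exists>k\<in>set (increasing_lists n). set k = S"
proof (induction n arbitrary: S)
  case 0
  then show ?case by simp
next
  case (Suc n)
  show ?case
  proof (cases "n \<in> S")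
    case True
    have "S - {n} \<subseteq> {..<n}" using Suc.prems by auto
    then obtain k where "k \<in> set (increasing_lists n)" "set k = S - {n}" using Suc.IH by blast
    then show ?thesis using True by (intro bexI[of _ "k @ [n]"]) auto
  next
    case False
    then have "S \<subseteq> {..<n}" using Suc.prems by (force simp: less_Suc_eq)
    then show ?thesis using Suc.IH by auto
  qed
qed

lemma distinct_increasing_lists: "distinct (increasing_lists n)"
proof (induction n)
  case 0
  then show ?case by simp
next
  case (Suc n)
  have "n \<notin> set k" if "k \<in> set (increasing_lists n)" for k
    using increasing_lists_sorted[OF that] by auto
  then have "set (increasing_lists n) \<inter> set (map (\<lambda>k. k @ [n]) (increasing_lists n)) = {}"
    by force
  moreover have "distinct (map (\<lambda>k. k @ [n]) (increasing_lists n))"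
    using Suc by (simp add: distinct_map inj_on_def)
  ultimately show ?case using Suc by simp
qed

definition bidegree_keys :: "int \<Rightarrow> int \<Rightarrow> nat list list" where
  "bidegree_keys p q = filter (\<lambda>k. int (length (filter (\<lambda>i. i < 4) k)) = p \<and>
      int (length (filter (\<lambda>i. 4 \<le> i \<and> i < 8) k)) = q) (increasing_lists 8)"

lemma bidegree_keys_0_2: "bidegree_keys 0 2 = [[4,5],[4,6],[5,6],[4,7],[5,7],[6,7]]"
  by (simp add: bidegree_keys_def numeral_eq_Suc)

lemma bidegree_keys_1_1: "bidegree_keys 1 1 =
    [[0,4],[1,4],[2,4],[3,4],[0,5],[1,5],[2,5],[3,5],[0,6],[1,6],[2,6],[3,6],[0,7],[1,7],[2,7],[3,7]]"
  by (simp add: bidegree_keys_def numeral_eq_Suc)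

lemma bidegree_keys_2_0: "bidegree_keys 2 0 = [[0,1],[0,2],[1,2],[0,3],[1,3],[2,3]]"
  by (simp add: bidegree_keys_def numeral_eq_Suc)

lemma Aform_support_bidegree_keys:
  assumes "\<alpha> \<in> Aform p q" "\<alpha> U \<noteq> 0"
  obtains k where "k \<in> set (bidegree_keys p q)" "key_set k = U"
proof -
  have U: "U \<subseteq> {..<8}" "int (nunb U) = p" "int (nbar U) = q"
    using assms by (auto simp: Aform_def)
  obtain k where k: "k \<in> set (increasing_lists 8)" "set k = U"
    using increasing_lists_complete[OF U(1)] by blast
  then have "distinct k" using increasing_lists_sorted[OF k(1)] by (simp add: strict_sorted_iff)
  then have "k \<in> set (bidegree_keys p q)"
    using k U nunb_key_set[of k] nbar_key_set[of k] by (auto simp: bidegree_keys_def key_set_def)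
  then show ?thesis using that k by (simp add: key_set_def)
qed

lemma Aform_eq_form_of_coordinates:
  assumes "\<alpha> \<in> Aform p q"
  shows "\<alpha> = form_of (map (\<lambda>k. (\<alpha> (key_set k), k)) (bidegree_keys p q))"
proof
  fix U
  have dist: "distinct (bidegree_keys p q)"
    by (simp add: bidegree_keys_def distinct_increasing_lists)
  have sorted: "sorted_wrt (<) k" if "k \<in> set (bidegree_keys p q)" for k
    using that by (auto simp: bidegree_keys_def dest: increasing_lists_sorted)
  have "form_of (map (\<lambda>k. (\<alpha> (key_set k), k)) (bidegree_keys p q)) U =
      (\<Sum>k\<in>set (bidegree_keys p q). \<alpha> (key_set k) * mono (key_set k) U)"
    using dist by (simp add: form_of_apply o_def sum_list_distinct_conv_sum_set)
  also have "\<dots> = \<alpha> U"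
  proof (cases "\<exists>k0\<in>set (bidegree_keys p q). key_set k0 = U")
    case True
    then obtain k0 where k0: "k0 \<in> set (bidegree_keys p q)" "key_set k0 = U" by blast
    have "key_set k = key_set k0 \<longleftrightarrow> k = k0" if "k \<in> set (bidegree_keys p q)" for k
      using sorted[OF that] sorted[OF k0(1)] by (simp add: key_set_eq_iff)
    then have "(\<Sum>k\<in>set (bidegree_keys p q). \<alpha> (key_set k) * mono (key_set k) U) =
        (\<Sum>k\<in>set (bidegree_keys p q). if k = k0 then \<alpha> U else 0)"
      using k0 by (intro sum.cong) (auto simp: mono_def)
    then show ?thesis using k0 by simp
  next
    case False
    then have "\<alpha> U = 0"
      using Aform_support_bidegree_keys[OF assms] by blast
    moreover have "(\<Sum>k\<in>set (bidegree_keys p q). \<alpha> (key_set k) * mono (key_set k) U) = 0"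
      using False by (intro sum.neutral) (auto simp: mono_def)
    ultimately show ?thesis by simp
  qed
  finally show "\<alpha> U = form_of (map (\<lambda>k. (\<alpha> (key_set k), k)) (bidegree_keys p q)) U" ..
qed

lemma Aform_fadd:
  assumes "\<alpha> \<in> Aform p q" "\<beta> \<in> Aform p q"
  shows "fadd \<alpha> \<beta> \<in> Aform p q"
proof -
  have "\<alpha> S \<noteq> 0 \<or> \<beta> S \<noteq> 0" if "\<alpha> S + \<beta> S \<noteq> 0" for S
    using that by auto
  then show ?thesis using assms unfolding Aform_def fadd_def by blast
qed

lemma Aform_fscale: "\<alpha> \<in> Aform p q \<Longrightarrow> fscale c \<alpha> \<in> Aform p q"
  by (auto simp: Aform_def fscale_def)

lemma fzero_in_Aform: "fzero \<in> Aform p q"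
  by (auto simp: Aform_def fzero_def)

lemma Aform_negative: "p < 0 \<or> q < 0 \<Longrightarrow> \<alpha> \<in> Aform p q \<Longrightarrow> \<alpha> = fzero"
  by (rule ext) (force simp: Aform_def fzero_def)

lemma form_of_in_Aform:
  "\<forall>t\<in>set ts. list_all (\<lambda>i. i < 8) (snd t) \<and> distinct (snd t) \<and>
     int (length (filter (\<lambda>i. i < 4) (snd t))) = p \<and>
     int (length (filter (\<lambda>i. 4 \<le> i \<and> i < 8) (snd t))) = q
   \<Longrightarrow> form_of ts \<in> Aform p q"
proof (induction ts)
  case Nil
  then show ?case by (simp add: fzero_in_Aform)
next
  case (Cons t ts)
  have "fscale (fst t) (mono (key_set (snd t))) \<in> Aform p q"
    using Cons.prems nunb_key_set[of "snd t"] nbar_key_set[of "snd t"]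
    by (auto simp: Aform_def fscale_def mono_def list_all_iff key_set_def)
  then show ?case using Cons by (simp add: Aform_fadd del: form_of.simps(1))
qed

lemma del_fadd: "del dg (fadd \<alpha> \<beta>) = fadd (del dg \<alpha>) (del dg \<beta>)"
  by (simp add: del_eq_d_component d_component_fadd)

lemma dbar_fadd: "dbar dg (fadd \<alpha> \<beta>) = fadd (dbar dg \<alpha>) (dbar dg \<beta>)"
  by (simp add: dbar_eq_d_component d_component_fadd)

lemma del_fscale: "del dg (fscale c \<alpha>) = fscale c (del dg \<alpha>)"
  by (simp add: del_eq_d_component d_component_fscale)

lemma dbar_fscale: "dbar dg (fscale c \<alpha>) = fscale c (dbar dg \<alpha>)"
  by (simp add: dbar_eq_d_component d_component_fscale)

lemma del_fzero: "del dg fzero = fzero"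
  by (simp add: del_eq_d_component d_component_fzero)

lemma dbar_fzero: "dbar dg fzero = fzero"
  by (simp add: dbar_eq_d_component d_component_fzero)

section \<open>Zig-zag description of the pages\<close>

definition Z2_witness :: "(nat \<Rightarrow> form) \<Rightarrow> int \<Rightarrow> int \<Rightarrow> form \<Rightarrow> form \<Rightarrow> bool" where
  "Z2_witness dg p q \<alpha> x1 \<longleftrightarrow> \<alpha> \<in> Aform p q \<and> x1 \<in> Aform (p + 1) (q - 1) \<and>
     dbar dg \<alpha> = fzero \<and> fadd (del dg \<alpha>) (dbar dg x1) = fzero"

definition Z3_witness :: "(nat \<Rightarrow> form) \<Rightarrow> int \<Rightarrow> int \<Rightarrow> form \<Rightarrow> form \<Rightarrow> form \<Rightarrow> bool" where
  "Z3_witness dg p q \<alpha> x1 x2 \<longleftrightarrow> Z2_witness dg p q \<alpha> x1 \<and> x2 \<in> Aform (p + 2) (q - 2) \<and>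
     fadd (del dg x1) (dbar dg x2) = fzero"

definition Zinf_witness :: "(nat \<Rightarrow> form) \<Rightarrow> int \<Rightarrow> int \<Rightarrow> form \<Rightarrow> form \<Rightarrow> form \<Rightarrow> bool" where
  "Zinf_witness dg p q \<alpha> x1 x2 \<longleftrightarrow> Z3_witness dg p q \<alpha> x1 x2 \<and> del dg x2 = fzero"

lemma Zinf_witness_Z3: "Zinf_witness dg p q \<alpha> x1 x2 \<Longrightarrow> Z3_witness dg p q \<alpha> x1 x2"
  by (simp add: Zinf_witness_def)

lemma Z3_witness_Z2: "Z3_witness dg p q \<alpha> x1 x2 \<Longrightarrow> Z2_witness dg p q \<alpha> x1"
  by (simp add: Z3_witness_def)

lemma fadd_eq_fzero_add:
  assumes "fadd A B = fzero" "fadd C D = fzero"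
  shows "fadd (fadd A C) (fadd B D) = fzero"
proof
  fix U
  have "A U = - B U" "C U = - D U"
    using assms by (simp_all add: fadd_def fzero_def fun_eq_iff eq_neg_iff_add_eq_0)
  then show "fadd (fadd A C) (fadd B D) U = fzero U"
    by (simp add: fadd_def fzero_def)
qed

lemma fadd_eq_fzero_scale: "fadd A B = fzero \<Longrightarrow> fadd (fscale c A) (fscale c B) = fzero"
  by (simp add: fadd_def fscale_def fzero_def fun_eq_iff flip: distrib_left)

lemma Z2_witness_fadd:
  "Z2_witness dg p q \<alpha> x \<Longrightarrow> Z2_witness dg p q \<beta> y \<Longrightarrow> Z2_witness dg p q (fadd \<alpha> \<beta>) (fadd x y)"
  unfolding Z2_witness_def
  by (simp add: Aform_fadd del_fadd dbar_fadd fadd_eq_fzero_add fadd_fzero_left)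

lemma Z2_witness_fscale: "Z2_witness dg p q \<alpha> x \<Longrightarrow> Z2_witness dg p q (fscale c \<alpha>) (fscale c x)"
  unfolding Z2_witness_def
  by (simp add: Aform_fscale del_fscale dbar_fscale fadd_eq_fzero_scale fscale_fzero)

lemma Z3_witness_fadd:
  "Z3_witness dg p q \<alpha> x x' \<Longrightarrow> Z3_witness dg p q \<beta> y y' \<Longrightarrow>
    Z3_witness dg p q (fadd \<alpha> \<beta>) (fadd x y) (fadd x' y')"
  unfolding Z3_witness_def
  by (simp add: Z2_witness_fadd Aform_fadd del_fadd dbar_fadd fadd_eq_fzero_add)

lemma Z3_witness_fscale:
  "Z3_witness dg p q \<alpha> x x' \<Longrightarrow> Z3_witness dg p q (fscale c \<alpha>) (fscale c x) (fscale c x')"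
  unfolding Z3_witness_def
  by (simp add: Z2_witness_fscale Aform_fscale del_fscale dbar_fscale fadd_eq_fzero_scale)

lemma Z2_witness_Nil: "Z2_witness dg p q (form_of []) fzero"
  by (simp add: Z2_witness_def fzero_in_Aform dbar_fzero del_fzero fadd_fzero_left)

lemma Z3_witness_Nil: "Z3_witness dg p q (form_of []) fzero fzero"
  using Z2_witness_Nil
  by (simp add: Z3_witness_def fzero_in_Aform dbar_fzero del_fzero fadd_fzero_left)

lemma Z2_witness_Cons:
  "Z2_witness dg p q (form_of [(1,k)]) x \<Longrightarrow> Z2_witness dg p q (form_of ts) y \<Longrightarrow>
    Z2_witness dg p q (form_of ((c,k) # ts)) (fadd (fscale c x) y)"
  by (subst form_of_Cons) (intro Z2_witness_fadd Z2_witness_fscale)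

lemma Z3_witness_Cons:
  "Z3_witness dg p q (form_of [(1,k)]) x x' \<Longrightarrow> Z3_witness dg p q (form_of ts) y y' \<Longrightarrow>
    Z3_witness dg p q (form_of ((c,k) # ts)) (fadd (fscale c x) y) (fadd (fscale c x') y')"
  by (subst form_of_Cons) (intro Z3_witness_fadd Z3_witness_fscale)

lemma Zr_1: "Zr dg 1 p q = {\<alpha> \<in> Aform p q. dbar dg \<alpha> = fzero}"
  by (auto simp: Zr_def)

lemma Zr_2_iff: "\<alpha> \<in> Zr dg 2 p q \<longleftrightarrow> (\<exists>x1. Z2_witness dg p q \<alpha> x1)"
proof
  assume "\<alpha> \<in> Zr dg 2 p q"
  then obtain xs where "\<alpha> \<in> Aform p q" "dbar dg \<alpha> = fzero" "length xs = 1"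
    "xs ! 0 \<in> Aform (p + 1) (q - 1)" "fadd (del dg \<alpha>) (dbar dg (xs ! 0)) = fzero"
    unfolding Zr_def by fastforce
  then show "\<exists>x1. Z2_witness dg p q \<alpha> x1" unfolding Z2_witness_def by blast
next
  assume "\<exists>x1. Z2_witness dg p q \<alpha> x1"
  then obtain x1 where "Z2_witness dg p q \<alpha> x1" by blast
  then show "\<alpha> \<in> Zr dg 2 p q"
    unfolding Zr_def Z2_witness_def by (intro CollectI conjI exI[of _ "[x1]"]) auto
qed

lemma Zr_3_iff: "\<alpha> \<in> Zr dg 3 p q \<longleftrightarrow> (\<exists>x1 x2. Z3_witness dg p q \<alpha> x1 x2)"
proof
  assume "\<alpha> \<in> Zr dg 3 p q"
  then obtain xs where h: "\<alpha> \<in> Aform p q" "dbar dg \<alpha> = fzero" "length xs = 2"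
    "\<forall>i<2. xs ! i \<in> Aform (p + int i + 1) (q - int i - 1)"
    "\<forall>i<2. fadd (del dg ((\<alpha> # xs) ! i)) (dbar dg (xs ! i)) = fzero"
    unfolding Zr_def by auto
  have "xs ! 0 \<in> Aform (p + 1) (q - 1)" "xs ! 1 \<in> Aform (p + 2) (q - 2)"
    using h(4)[rule_format, of 0] h(4)[rule_format, of 1] by (auto simp: add.assoc)
  moreover have "fadd (del dg \<alpha>) (dbar dg (xs ! 0)) = fzero"
    "fadd (del dg (xs ! 0)) (dbar dg (xs ! 1)) = fzero"
    using h(5)[rule_format, of 0] h(5)[rule_format, of 1] by auto
  ultimately show "\<exists>x1 x2. Z3_witness dg p q \<alpha> x1 x2"
    using h unfolding Z3_witness_def Z2_witness_def by blast
next
  assume "\<exists>x1 x2. Z3_witness dg p q \<alpha> x1 x2"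
  then obtain x1 x2 where w: "Z3_witness dg p q \<alpha> x1 x2" by blast
  have "\<forall>i<2. [x1, x2] ! i \<in> Aform (p + int i + 1) (q - int i - 1)"
    using w by (auto simp: Z3_witness_def Z2_witness_def less_2_cases_iff add.assoc)
  moreover have "\<forall>i<2. fadd (del dg ((\<alpha> # [x1, x2]) ! i)) (dbar dg ([x1, x2] ! i)) = fzero"
    using w by (auto simp: Z3_witness_def Z2_witness_def less_2_cases_iff)
  ultimately show "\<alpha> \<in> Zr dg 3 p q"
    using w unfolding Zr_def Z3_witness_def Z2_witness_def
    by (intro CollectI conjI exI[of _ "[x1, x2]"]) auto
qed

lemma Zr_antimono:
  assumes "1 \<le> s" "s \<le> r"
  shows "Zr dg r p q \<subseteq> Zr dg s p q"
proof
  fix \<alpha> assume "\<alpha> \<in> Zr dg r p q"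
  then obtain xs where h: "\<alpha> \<in> Aform p q" "dbar dg \<alpha> = fzero" "length xs = r - 1"
    "\<forall>i<r-1. xs ! i \<in> Aform (p + int i + 1) (q - int i - 1)"
    "\<forall>i<r-1. fadd (del dg ((\<alpha> # xs) ! i)) (dbar dg (xs ! i)) = fzero"
    unfolding Zr_def by auto
  have "(\<alpha> # take (s - 1) xs) ! i = (\<alpha> # xs) ! i" if "i < s - 1" for i
    using that by (cases i) auto
  then show "\<alpha> \<in> Zr dg s p q"
    unfolding Zr_def using h assms by (intro CollectI conjI exI[of _ "take (s - 1) xs"]) auto
qed

text \<open>A zig-zag that stops is padded with zeros to a zig-zag of any length.\<close>
lemma Zinf_witness_in_Zr:
  assumes "3 \<le> r" "Zinf_witness dg p q \<alpha> x1 x2"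
  shows "\<alpha> \<in> Zr dg r p q"
proof -
  define xs where "xs = [x1, x2] @ replicate (r - 3) fzero"
  have len: "length xs = r - 1" using assms(1) by (simp add: xs_def)
  have w: "\<alpha> \<in> Aform p q" "x1 \<in> Aform (p + 1) (q - 1)" "x2 \<in> Aform (p + 2) (q - 2)"
    "dbar dg \<alpha> = fzero" "fadd (del dg \<alpha>) (dbar dg x1) = fzero"
    "fadd (del dg x1) (dbar dg x2) = fzero" "del dg x2 = fzero"
    using assms(2) by (auto simp: Zinf_witness_def Z3_witness_def Z2_witness_def)
  have xs_nth: "xs ! i = (if i = 0 then x1 else if i = 1 then x2 else fzero)" if "i < r - 1" for i
    using that assms(1) by (auto simp: xs_def nth_append less_2_cases_iff)
  show ?thesis unfolding Zr_def
  proof (intro CollectI conjI exI[of _ xs] w len allI impI)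
    fix i assume i: "i < r - 1"
    show "xs ! i \<in> Aform (p + int i + 1) (q - int i - 1)"
      using xs_nth[OF i] w fzero_in_Aform by (auto simp: add.assoc)
    show "fadd (del dg ((\<alpha> # xs) ! i)) (dbar dg (xs ! i)) = fzero"
    proof (cases "i \<le> 2")
      case True
      then consider "i = 0" | "i = 1" | "i = 2" by linarith
      then show ?thesis
      proof cases
        case 3
        then have "(\<alpha> # xs) ! i = x2" using xs_nth[of 1] i by simp
        then show ?thesis using xs_nth[OF i] w 3 by (simp add: dbar_fzero fadd_fzero_right)
      qed (use xs_nth[OF i] xs_nth[of 0] i w in auto)
    next
      case False
      then have "(\<alpha> # xs) ! i = fzero" using xs_nth[of "i - 1"] i by (cases i) auto
      then show ?thesis using xs_nth[OF i] False by (simp add: dbar_fzero del_fzero fadd_fzero_right)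
    qed
  qed
qed

text \<open>For p = 0 every zig-zag term of \<^const>\<open>Br\<close> except the \<partial>-bar-exact one has negative
holomorphic degree, hence vanishes.\<close>
lemma Br_bidegree_0:
  assumes "1 \<le> r"
  shows "Br dg r 0 q = {dbar dg \<gamma> | \<gamma>. \<gamma> \<in> Aform 0 (q - 1)}"
proof (intro set_eqI iffI)
  fix \<beta> assume "\<beta> \<in> Br dg r 0 q"
  then obtain \<gamma> bs where h: "\<beta> = fadd (if r \<ge> 2 then del dg (hd bs) else fzero) (dbar dg \<gamma>)"
    "\<gamma> \<in> Aform 0 (q - 1)" "length bs = r - 1" "\<forall>i<r-1. bs ! i \<in> Aform (0 - 1 - int i) (q + int i)"
    unfolding Br_def by blast
  have "(if r \<ge> 2 then del dg (hd bs) else fzero) = fzero"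
  proof (cases "r \<ge> 2")
    case True
    then have "bs ! 0 \<in> Aform (-1) q" using h(4)[rule_format, of 0] by simp
    then have "bs ! 0 = fzero" by (intro Aform_negative) auto
    moreover have "hd bs = bs ! 0" using h(3) True by (cases bs) auto
    ultimately show ?thesis using True by (simp add: del_fzero)
  qed simp
  then show "\<beta> \<in> {dbar dg \<gamma> | \<gamma>. \<gamma> \<in> Aform 0 (q - 1)}" using h by (auto simp: fadd_fzero_left)
next
  fix \<beta> assume "\<beta> \<in> {dbar dg \<gamma> | \<gamma>. \<gamma> \<in> Aform 0 (q - 1)}"
  then obtain \<gamma> where g: "\<beta> = dbar dg \<gamma>" "\<gamma> \<in> Aform 0 (q - 1)" by blast
  show "\<beta> \<in> Br dg r 0 q" unfolding Br_def
  proof (intro CollectI exI conjI)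
    show "\<beta> = fadd (if r \<ge> 2 then del dg (hd (replicate (r - 1) fzero)) else fzero) (dbar dg \<gamma>)"
      using g assms by (cases r) (auto simp: del_fzero fadd_fzero_left)
  qed (use g assms in \<open>auto simp: fzero_in_Aform dbar_fzero del_fzero fadd_fzero_left\<close>)
qed

section \<open>The model\<close>

definition struct_terms :: "complex \<Rightarrow> complex \<Rightarrow> complex \<Rightarrow> complex \<Rightarrow> nat \<Rightarrow> terms" where
  "struct_terms d n A B j =
    (if j = 1 then [(1,[0,4])]
     else if j = 2 then [(1,[0,3]), (\<i>*d*B,[0,5]), (1,[0,7]), (A,[1,4])]
     else if j = 3 then [(\<i>*n,[0,4]), (\<i>*d,[0,6]), (B,[1,5]), (-\<i>*d,[2,4])]
     else if j = 5 then [(-1,[0,4])]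
     else if j = 6 then [(-A,[0,5]), (\<i>*d*B,[1,4]), (-1,[3,4]), (1,[4,7])]
     else if j = 7 then [(\<i>*n,[0,4]), (-\<i>*d,[0,6]), (-B,[1,5]), (\<i>*d,[2,4])]
     else [])"

abbreviation model_dg :: "complex \<Rightarrow> complex \<Rightarrow> complex \<Rightarrow> complex \<Rightarrow> nat \<Rightarrow> form" where
  "model_dg d n A B \<equiv> \<lambda>j. form_of (struct_terms d n A B j)"

lemma struct_eq_eq_model_dg:
  "struct_eq 1 \<delta> \<nu> a b = model_dg (of_real \<delta>) (of_real \<nu>) (of_real a) (of_real b)"
proof
  fix j
  show "struct_eq 1 \<delta> \<nu> a b j = form_of (struct_terms (of_real \<delta>) (of_real \<nu>) (of_real a) (of_real b) j)"
    by (auto simp: struct_eq_def struct_terms_def Let_def w2_form_of form_of_append[symmetric]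
        form_of_scale_terms[symmetric] key_set_disjoint_iff wsign_key_set scale_terms_def barix_def
        form_of_cconj_terms cconj_fzero sorted_keys_def coeff_of_def
        simp del: form_of.simps(2) intro!: form_of_eqI)
qed

lemmas model_simps = struct_terms_def del_form_of dbar_form_of d_component_terms_def dmono_terms_def
  key_set_disjoint_iff wsign_key_set scale_terms_def shift10_def shift01_def nunb_key_set nbar_key_set
  form_of_append[symmetric] form_of_in_Aform
  del_fzero dbar_fzero fzero_in_Aform fadd_fzero_left fadd_fzero_right

text \<open>Witness lemmas are named after the generator they start from, e.g. 12 for
omega^{bar1 bar2}, which is \<open>form_of [(1,[4,5])]\<close>.\<close>
lemma Zinf_witness_12: "Zinf_witness (model_dg d n A B) 0 2 (form_of [(1,[4,5])]) fzero fzero"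
  unfolding Zinf_witness_def Z3_witness_def Z2_witness_def
  by (simp add: model_simps del: form_of.simps(2))

lemma Zinf_witness_13:
  "Zinf_witness (model_dg d n A B) 0 2 (form_of [(1,[4,6])]) (form_of [(A,[1,5])]) (form_of [(-1,[0,2])])"
  unfolding Zinf_witness_def Z3_witness_def Z2_witness_def
  by (simp add: model_simps del: form_of.simps(2))
    (intro conjI form_of_eq_fzero; simp add: sorted_keys_def coeff_of_def)

lemma Zinf_witness_14:
  "Zinf_witness (model_dg d n A B) 0 2 (form_of [(1,[4,7])]) (form_of [(-1,[3,4])]) fzero"
  unfolding Zinf_witness_def Z3_witness_def Z2_witness_def
  by (simp add: model_simps del: form_of.simps(2))
    (intro conjI form_of_eq_fzero; simp add: sorted_keys_def coeff_of_def)

lemma Zinf_witness_24: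
  "Zinf_witness (model_dg d n A B) 0 2 (form_of [(1,[5,7])])
    (form_of [(-1,[3,5]), (1,[1,7]), (2*\<i>*n,[1,5])]) (form_of [(1,[1,3])])"
  unfolding Zinf_witness_def Z3_witness_def Z2_witness_def
  by (simp add: model_simps del: form_of.simps(2))
    (intro conjI form_of_eq_fzero; simp add: sorted_keys_def coeff_of_def)

text \<open>The first step of a zig-zag from omega^{bar3 bar4}; the equation for its
omega^{3 bar4} coefficient P is where \<open>K\<close> enters.\<close>
definition zigzag_x1_34 :: "complex \<Rightarrow> complex \<Rightarrow> complex \<Rightarrow> complex \<Rightarrow> complex \<Rightarrow> form" where
  "zigzag_x1_34 d n A B P = form_of [(-1,[3,6]), (P,[2,7]), (\<i>*d*B*P - A,[2,5]), (A*P + \<i>*d*B,[1,6]),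
     (-\<i>*d*A*P + B - 2*d*n, [3,4])]"

lemma Z2_witness_34:
  assumes "d * d = 1" and "2 * \<i> * d * A * B * P = A * A + B * B - 2 * d * n * B"
  shows "Z2_witness (model_dg d n A B) 0 2 (form_of [(1,[6,7])]) (zigzag_x1_34 d n A B P)"
  unfolding Z2_witness_def zigzag_x1_34_def
  apply (simp add: model_simps del: form_of.simps(2))
  apply (intro conjI form_of_eq_fzero; simp add: sorted_keys_def coeff_of_def)
  apply (intro conjI)
  using assms i_squared by algebra+

lemma Z3_witness_34:
  assumes "d * d = 1" and P: "2 * \<i> * d * A * B * P = A * A + B * B - 2 * d * n * B"
    and "A \<noteq> 0" "B \<noteq> 0" and "B * Y = - A * (A * P + \<i> * d * B)"
    and "(A * A + B * B - 2 * d * n * B) * (A * A + B * B - 2 * d * n * B) = 4 * A * A * B * B"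
  shows "Z3_witness (model_dg d n A B) 0 2 (form_of [(1,[6,7])]) (zigzag_x1_34 d n A B P)
    (form_of [(P,[2,3]), (Y,[0,3])])"
proof -
  have "A * inverse A = 1" "B * inverse B = 1" using assms(3,4) by simp_all
  then show ?thesis
    unfolding Z3_witness_def using Z2_witness_34[OF assms(1) P]
    apply (simp add: zigzag_x1_34_def model_simps del: form_of.simps(2))
    apply (intro conjI form_of_eq_fzero; simp add: sorted_keys_def coeff_of_def)
    apply (intro conjI)
    using assms i_squared by algebra+
qed

text \<open>The (1,2)- and (2,1)-parts of the zig-zag equations give two linear relations between the
omega^{bar3 bar4} coefficient of \<open>\<alpha>\<close> and the omega^{3 bar4} coefficient of \<open>x\<^sub>1\<close>.\<close>
lemma Z3_witness_34_relations:
  assumes "d * d = 1" "B \<noteq> 0" and "Z3_witness (model_dg d n A B) 0 2 \<alpha> x1 x2"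
  shows "2 * \<i> * d * A * B * x1 (key_set [2,7]) = \<alpha> (key_set [6,7]) * (A * A + B * B - 2 * d * n * B)"
    and "\<i> * d * (A * A + B * B - 2 * d * n * B) * x1 (key_set [2,7]) = 2 * \<alpha> (key_set [6,7]) * A * B"
proof -
  define G where "G = model_dg d n A B"
  define ca where "ca = (\<lambda>k. \<alpha> (key_set k))"
  define cx where "cx = (\<lambda>k. x1 (key_set k))"
  define cy where "cy = (\<lambda>k. x2 (key_set k))"
  have w: "\<alpha> \<in> Aform 0 2" "x1 \<in> Aform 1 1" "x2 \<in> Aform 2 0" "dbar G \<alpha> = fzero"
     "fadd (del G \<alpha>) (dbar G x1) = fzero" "fadd (del G x1) (dbar G x2) = fzero"
    using assms(3) by (auto simp: Z3_witness_def Z2_witness_def G_def)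
  have coords: "\<alpha> = form_of (map (\<lambda>k. (ca k, k)) (bidegree_keys 0 2))"
    "x1 = form_of (map (\<lambda>k. (cx k, k)) (bidegree_keys 1 1))"
    "x2 = form_of (map (\<lambda>k. (cy k, k)) (bidegree_keys 2 0))"
    unfolding ca_def cx_def cy_def by (rule Aform_eq_form_of_coordinates, rule w)+
  note e = w(4-6)[unfolded coords]
  have "d \<noteq> 0" using assms(1) by auto
  have lin:
    "ca [6,7] * B + cx [3,6] * B = 0"
    "cx [2,7] * (\<i> * d * B) - cx [2,5] = ca [6,7] * A"
    "ca [6,7] * (\<i> * d * B) + (cx [2,7] * A - cx [1,6]) = 0"
    "- (ca [4,7] * (\<i> * d)) - ca [6,7] * (\<i> * n) + (cx [1,6] + cx [3,6] * (\<i> * n) - cx [3,4] * (\<i> * d)) = 0"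
    "cx [2,5] * A - cx [3,4] * B = ca [4,7] * B"
    "cx [0,7] * B - cx [1,6] * A = cy [0,3] * B"
    "2 * (\<i> * (n * cx [2,7])) + (cy [0,3] * (\<i> * d) - cx [2,5] - cx [0,7] * (\<i> * d)) = 0"
    using fzero_apply[OF e(1), of "key_set [4,5,7]"]
      fzero_apply[OF e(2), of "key_set [1,5,6]"] fzero_apply[OF e(2), of "key_set [0,5,7]"]
      fzero_apply[OF e(2), of "key_set [1,4,7]"] fzero_apply[OF e(2), of "key_set [0,4,6]"]
      fzero_apply[OF e(2), of "key_set [1,4,5]"]
      fzero_apply[OF e(3), of "key_set [0,1,5]"] fzero_apply[OF e(3), of "key_set [0,2,4]"]
      fzero_apply[OF e(3), of "key_set [0,1,7]"] fzero_apply[OF e(3), of "key_set [0,2,6]"]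
    by (simp_all add: G_def bidegree_keys_0_2 bidegree_keys_1_1 bidegree_keys_2_0 model_simps fadd_def
        form_of_key sorted_keys_def coeff_of_def \<open>d \<noteq> 0\<close>
        del: form_of.simps(2) mult_eq_0_iff mult_cancel_left mult_cancel_right)
  have "B * inverse B = 1" using assms(2) by simp
  then have "2 * \<i> * d * A * B * cx [2,7] = ca [6,7] * (A * A + B * B - 2 * d * n * B)"
    using lin(1-5) assms(1) i_squared by algebra
  moreover have "\<i> * d * (A * A + B * B - 2 * d * n * B) * cx [2,7] = 2 * ca [6,7] * A * B"
    using lin(2,3,6,7) assms(1) i_squared by algebra
  ultimately show "2 * \<i> * d * A * B * x1 (key_set [2,7]) = \<alpha> (key_set [6,7]) * (A * A + B * B - 2 * d * n * B)"
    and "\<i> * d * (A * A + B * B - 2 * d * n * B) * x1 (key_set [2,7]) = 2 * \<alpha> (key_set [6,7]) * A * B"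
    unfolding ca_def cx_def by simp_all
qed

lemma Z3_witness_coeff_34_eq_0:
  assumes "d * d = 1" "B \<noteq> 0"
    and "(A * A + B * B - 2 * d * n * B) * (A * A + B * B - 2 * d * n * B) \<noteq> 4 * A * A * B * B"
    and "Z3_witness (model_dg d n A B) 0 2 \<alpha> x1 x2"
  shows "\<alpha> (key_set [6,7]) = 0"
proof -
  have "\<alpha> (key_set [6,7]) * ((A * A + B * B - 2 * d * n * B) * (A * A + B * B - 2 * d * n * B)
      - 4 * A * A * B * B) = 0"
    using Z3_witness_34_relations[OF assms(1,2,4)] by algebra
  then show ?thesis using assms(3) by simp
qed

lemma dbar_closed_02_eq_form_of:
  assumes "\<alpha> \<in> Aform 0 2" "dbar (model_dg d n A B) \<alpha> = fzero"
  shows "\<alpha> = form_of [(\<alpha> (key_set [4,5]), [4,5]), (\<alpha> (key_set [4,6]), [4,6]),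
    (\<alpha> (key_set [4,7]), [4,7]), (\<alpha> (key_set [5,7]), [5,7]), (\<alpha> (key_set [6,7]), [6,7])]"
proof -
  define ca where "ca = (\<lambda>k. \<alpha> (key_set k))"
  have \<alpha>: "\<alpha> = form_of (map (\<lambda>k. (ca k, k)) (bidegree_keys 0 2))"
    unfolding ca_def by (rule Aform_eq_form_of_coordinates[OF assms(1)])
  have "ca [5,6] = 0"
    using fzero_apply[OF assms(2)[unfolded \<alpha>], of "key_set [4,5,7]"]
    by (simp add: bidegree_keys_0_2 model_simps form_of_key sorted_keys_def coeff_of_def
        del: form_of.simps(2))
  then have "form_of (map (\<lambda>k. (ca k, k)) (bidegree_keys 0 2)) =
      form_of [(ca [4,5], [4,5]), (ca [4,6], [4,6]), (ca [4,7], [4,7]), (ca [5,7], [5,7]), (ca [6,7], [6,7])]"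
    by (intro form_of_eqI) (simp_all add: bidegree_keys_0_2 sorted_keys_def coeff_of_def)
  with \<alpha> show ?thesis unfolding ca_def by (rule trans)
qed

lemma dbar_model_6: "dbar (model_dg d n A B) (form_of [(c,[6])]) = form_of [(c,[4,7])]"
  by (simp add: model_simps del: form_of.simps)

lemma form_of_02_eq_lincomb_4:
  "form_of [(c45,[4,5]), (c46,[4,6]), (c47,[4,7]), (c57,[5,7]), (c67,[6,7])] =
    fadd (lincomb [c45, c46, c57, c67] [w2 4 5, w2 4 6, w2 5 7, w2 6 7])
      (dbar (model_dg d n A B) (form_of [(c47,[6])]))"
  by (simp only: lincomb_Cons lincomb_Nil w2_eq_form_of dbar_model_6 form_of_scale_terms[symmetric]
      form_of_append[symmetric] form_of.simps(1)[symmetric] semiring_norm)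
    (rule form_of_eqI; simp add: sorted_keys_def coeff_of_def scale_terms_def)

lemma form_of_02_eq_lincomb_3:
  "form_of [(c45,[4,5]), (c46,[4,6]), (c47,[4,7]), (c57,[5,7]), (0,[6,7])] =
    fadd (lincomb [c45, c46, c57] [w2 4 5, w2 4 6, w2 5 7])
      (dbar (model_dg d n A B) (form_of [(c47,[6])]))"
  by (simp only: lincomb_Cons lincomb_Nil w2_eq_form_of dbar_model_6 form_of_scale_terms[symmetric]
      form_of_append[symmetric] form_of.simps(1)[symmetric] semiring_norm)
    (rule form_of_eqI; simp add: sorted_keys_def coeff_of_def scale_terms_def)

lemma dbar_6_in_Br:
  assumes "1 \<le> r"
  shows "dbar (model_dg d n A B) (form_of [(c,[6])]) \<in> Br (model_dg d n A B) r 0 2"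
proof -
  have "form_of [(c,[6])] \<in> Aform 0 (2 - 1)"
    by (intro form_of_in_Aform) simp
  then show ?thesis unfolding Br_bidegree_0[OF assms] by blast
qed

lemma Zr_1_eq_span:
  assumes "\<alpha> \<in> Zr (model_dg d n A B) 1 0 2"
  shows "\<alpha> = fadd (lincomb [\<alpha> (key_set [4,5]), \<alpha> (key_set [4,6]), \<alpha> (key_set [5,7]), \<alpha> (key_set [6,7])]
      [w2 4 5, w2 4 6, w2 5 7, w2 6 7]) (dbar (model_dg d n A B) (form_of [(\<alpha> (key_set [4,7]),[6])]))"
proof -
  have "\<alpha> \<in> Aform 0 2" "dbar (model_dg d n A B) \<alpha> = fzero"
    using assms unfolding Zr_1 by auto
  then show ?thesis
    by (rule trans[OF dbar_closed_02_eq_form_of form_of_02_eq_lincomb_4])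
qed

context
  fixes d n A B :: complex
  assumes d: "d * d = 1" and A: "A \<noteq> 0" and B: "B \<noteq> 0"
begin

lemma Z2_witness_34_model: "\<exists>x1. Z2_witness (model_dg d n A B) 0 2 (form_of [(1,[6,7])]) x1"
proof -
  define P where "P = (A * A + B * B - 2 * d * n * B) / (2 * \<i> * d * A * B)"
  have "d \<noteq> 0" using d by auto
  then have "2 * \<i> * d * A * B * P = A * A + B * B - 2 * d * n * B"
    using A B by (simp add: P_def)
  then show ?thesis using Z2_witness_34[OF d] by blast
qed

lemma Z2_witness_02_model:
  "\<exists>x1. Z2_witness (model_dg d n A B) 0 2
     (form_of [(c45,[4,5]), (c46,[4,6]), (c47,[4,7]), (c57,[5,7]), (c67,[6,7])]) x1"
proof -
  obtain x34 where w34: "Z2_witness (model_dg d n A B) 0 2 (form_of [(1,[6,7])]) x34"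
    using Z2_witness_34_model by blast
  show ?thesis
    using Z2_witness_Cons[OF Z3_witness_Z2[OF Zinf_witness_Z3[OF Zinf_witness_12]]
      Z2_witness_Cons[OF Z3_witness_Z2[OF Zinf_witness_Z3[OF Zinf_witness_13]]
      Z2_witness_Cons[OF Z3_witness_Z2[OF Zinf_witness_Z3[OF Zinf_witness_14]]
      Z2_witness_Cons[OF Z3_witness_Z2[OF Zinf_witness_Z3[OF Zinf_witness_24]]
      Z2_witness_Cons[OF w34 Z2_witness_Nil]]]]]
    by blast
qed

lemma Z3_witness_02_model:
  assumes "(A * A + B * B - 2 * d * n * B) * (A * A + B * B - 2 * d * n * B) = 4 * A * A * B * B"
  shows "\<exists>x1 x2. Z3_witness (model_dg d n A B) 0 2
     (form_of [(c45,[4,5]), (c46,[4,6]), (c47,[4,7]), (c57,[5,7]), (c67,[6,7])]) x1 x2"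
proof -
  define P where "P = (A * A + B * B - 2 * d * n * B) / (2 * \<i> * d * A * B)"
  define Y where "Y = - A * (A * P + \<i> * d * B) / B"
  have "d \<noteq> 0" using d by auto
  then have "2 * \<i> * d * A * B * P = A * A + B * B - 2 * d * n * B"
    using A B by (simp add: P_def)
  moreover have "B * Y = - A * (A * P + \<i> * d * B)"
    using B by (simp add: Y_def)
  ultimately have w34: "Z3_witness (model_dg d n A B) 0 2 (form_of [(1,[6,7])]) (zigzag_x1_34 d n A B P)
      (form_of [(P,[2,3]), (Y,[0,3])])"
    by (rule Z3_witness_34[OF d _ A B _ assms])
  show ?thesis
    using Z3_witness_Cons[OF Zinf_witness_Z3[OF Zinf_witness_12]
      Z3_witness_Cons[OF Zinf_witness_Z3[OF Zinf_witness_13]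
      Z3_witness_Cons[OF Zinf_witness_Z3[OF Zinf_witness_14]
      Z3_witness_Cons[OF Zinf_witness_Z3[OF Zinf_witness_24]
      Z3_witness_Cons[OF w34 Z3_witness_Nil]]]]]
    by blast
qed

lemma Zr_2_eq_Zr_1_model: "Zr (model_dg d n A B) 2 0 2 = Zr (model_dg d n A B) 1 0 2"
proof
  show "Zr (model_dg d n A B) 2 0 2 \<subseteq> Zr (model_dg d n A B) 1 0 2"
    by (rule Zr_antimono) auto
  show "Zr (model_dg d n A B) 1 0 2 \<subseteq> Zr (model_dg d n A B) 2 0 2"
  proof
    fix \<alpha> assume "\<alpha> \<in> Zr (model_dg d n A B) 1 0 2"
    then have "\<alpha> = form_of [(\<alpha> (key_set [4,5]), [4,5]), (\<alpha> (key_set [4,6]), [4,6]),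
        (\<alpha> (key_set [4,7]), [4,7]), (\<alpha> (key_set [5,7]), [5,7]), (\<alpha> (key_set [6,7]), [6,7])]"
      unfolding Zr_1 by (intro dbar_closed_02_eq_form_of[of _ d n A B]) auto
    then show "\<alpha> \<in> Zr (model_dg d n A B) 2 0 2"
      unfolding Zr_2_iff using Z2_witness_02_model by metis
  qed
qed

lemma Zr_3_eq_Zr_2_model_iff:
  "Zr (model_dg d n A B) 3 0 2 = Zr (model_dg d n A B) 2 0 2 \<longleftrightarrow>
    (A * A + B * B - 2 * d * n * B) * (A * A + B * B - 2 * d * n * B) = 4 * A * A * B * B"
proof
  assume K: "(A * A + B * B - 2 * d * n * B) * (A * A + B * B - 2 * d * n * B) = 4 * A * A * B * B"
  show "Zr (model_dg d n A B) 3 0 2 = Zr (model_dg d n A B) 2 0 2"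
  proof
    show "Zr (model_dg d n A B) 3 0 2 \<subseteq> Zr (model_dg d n A B) 2 0 2"
      by (rule Zr_antimono) auto
    show "Zr (model_dg d n A B) 2 0 2 \<subseteq> Zr (model_dg d n A B) 3 0 2"
    proof
      fix \<alpha> assume "\<alpha> \<in> Zr (model_dg d n A B) 2 0 2"
      then have "\<alpha> = form_of [(\<alpha> (key_set [4,5]), [4,5]), (\<alpha> (key_set [4,6]), [4,6]),
          (\<alpha> (key_set [4,7]), [4,7]), (\<alpha> (key_set [5,7]), [5,7]), (\<alpha> (key_set [6,7]), [6,7])]"
        unfolding Zr_2_eq_Zr_1_model Zr_1 by (intro dbar_closed_02_eq_form_of[of _ d n A B]) auto
      then show "\<alpha> \<in> Zr (model_dg d n A B) 3 0 2"
        unfolding Zr_3_iff using Z3_witness_02_model[OF K] by metis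
    qed
  qed
next
  assume eq: "Zr (model_dg d n A B) 3 0 2 = Zr (model_dg d n A B) 2 0 2"
  show "(A * A + B * B - 2 * d * n * B) * (A * A + B * B - 2 * d * n * B) = 4 * A * A * B * B"
  proof (rule ccontr)
    assume K: "(A * A + B * B - 2 * d * n * B) * (A * A + B * B - 2 * d * n * B) \<noteq> 4 * A * A * B * B"
    have "form_of [(1,[6,7])] \<in> Zr (model_dg d n A B) 3 0 2"
      unfolding eq Zr_2_iff by (rule Z2_witness_34_model)
    then obtain x1 x2 where "Z3_witness (model_dg d n A B) 0 2 (form_of [(1,[6,7])]) x1 x2"
      unfolding Zr_3_iff by blast
    from Z3_witness_coeff_34_eq_0[OF d B K this] show False
      by (simp add: mono_def fadd_def fscale_def fzero_def)
  qed
qed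

lemma Epage_spanned_model_1_2:
  assumes "r = 1 \<or> r = 2"
  shows "Epage_spanned (model_dg d n A B) r 0 2 [w2 4 5, w2 4 6, w2 5 7, w2 6 7]"
proof -
  have Zr: "Zr (model_dg d n A B) r 0 2 = Zr (model_dg d n A B) 1 0 2"
    using assms Zr_2_eq_Zr_1_model by auto
  have in_Zr_1: "form_of [(1,k)] \<in> Zr (model_dg d n A B) 1 0 2"
    if "Z2_witness (model_dg d n A B) 0 2 (form_of [(1,k)]) x1" for k x1
    using that Zr_2_iff Zr_2_eq_Zr_1_model by blast
  obtain x67 where "Z2_witness (model_dg d n A B) 0 2 (form_of [(1,[6,7])]) x67"
    using Z2_witness_34_model by blast
  then have gens: "set [w2 4 5, w2 4 6, w2 5 7, w2 6 7] \<subseteq> Zr (model_dg d n A B) 1 0 2"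
    using in_Zr_1[OF Z3_witness_Z2[OF Zinf_witness_Z3[OF Zinf_witness_12]]]
      in_Zr_1[OF Z3_witness_Z2[OF Zinf_witness_Z3[OF Zinf_witness_13]]]
      in_Zr_1[OF Z3_witness_Z2[OF Zinf_witness_Z3[OF Zinf_witness_24]]] in_Zr_1
    by (simp add: w2_eq_form_of del: form_of.simps)
  show ?thesis
    unfolding Epage_spanned_def Zr
  proof (intro conjI gens ballI)
    fix \<alpha> assume "\<alpha> \<in> Zr (model_dg d n A B) 1 0 2"
    then show "\<exists>cs \<beta>. length cs = length [w2 4 5, w2 4 6, w2 5 7, w2 6 7] \<and> \<beta> \<in> Br (model_dg d n A B) r 0 2 \<and>
        \<alpha> = fadd (lincomb cs [w2 4 5, w2 4 6, w2 5 7, w2 6 7]) \<beta>"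
      using assms Zr_1_eq_span[where d = d and n = n and A = A and B = B]
        dbar_6_in_Br[where d = d and n = n and A = A and B = B]
      by (intro exI conjI) (auto simp del: form_of.simps)
  qed
qed

lemma Epage_spanned_model_ge_3:
  assumes K: "(A * A + B * B - 2 * d * n * B) * (A * A + B * B - 2 * d * n * B) \<noteq> 4 * A * A * B * B"
    and r: "3 \<le> r"
  shows "Epage_spanned (model_dg d n A B) r 0 2 [w2 4 5, w2 4 6, w2 5 7]"
  unfolding Epage_spanned_def
proof (intro conjI ballI)
  show "set [w2 4 5, w2 4 6, w2 5 7] \<subseteq> Zr (model_dg d n A B) r 0 2"
    using Zinf_witness_in_Zr[OF r Zinf_witness_12] Zinf_witness_in_Zr[OF r Zinf_witness_13]
      Zinf_witness_in_Zr[OF r Zinf_witness_24]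
    by (simp add: w2_eq_form_of del: form_of.simps)
next
  fix \<alpha> assume "\<alpha> \<in> Zr (model_dg d n A B) r 0 2"
  then have "\<alpha> \<in> Zr (model_dg d n A B) 3 0 2" "\<alpha> \<in> Zr (model_dg d n A B) 1 0 2"
    using Zr_antimono[of 3 r "model_dg d n A B" 0 2] Zr_antimono[of 1 r "model_dg d n A B" 0 2] r by auto
  then have c67: "\<alpha> (key_set [6,7]) = 0" and "\<alpha> \<in> Aform 0 2" "dbar (model_dg d n A B) \<alpha> = fzero"
    using Z3_witness_coeff_34_eq_0[OF d B K] unfolding Zr_3_iff Zr_1 by auto
  then have "\<alpha> = form_of [(\<alpha> (key_set [4,5]), [4,5]), (\<alpha> (key_set [4,6]), [4,6]),
      (\<alpha> (key_set [4,7]), [4,7]), (\<alpha> (key_set [5,7]), [5,7]), (\<alpha> (key_set [6,7]), [6,7])]"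
    by (intro dbar_closed_02_eq_form_of)
  then have "\<alpha> = fadd (lincomb [\<alpha> (key_set [4,5]), \<alpha> (key_set [4,6]), \<alpha> (key_set [5,7])]
      [w2 4 5, w2 4 6, w2 5 7]) (dbar (model_dg d n A B) (form_of [(\<alpha> (key_set [4,7]),[6])]))"
    unfolding c67 by (rule trans[OF _ form_of_02_eq_lincomb_3])
  then show "\<exists>cs \<beta>. length cs = length [w2 4 5, w2 4 6, w2 5 7] \<and> \<beta> \<in> Br (model_dg d n A B) r 0 2 \<and>
      \<alpha> = fadd (lincomb cs [w2 4 5, w2 4 6, w2 5 7]) \<beta>"
    using dbar_6_in_Br[where d = d and n = n and A = A and B = B] r by (intro exI conjI) (auto simp del: form_of.simps)
qed

end

lemma Theta_eq_0_iff:
  assumes "d = complex_of_real \<delta>" "n = complex_of_real \<nu>" "A = complex_of_real a" "B = complex_of_real b"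
  shows "((a - b)^2 - 2 * \<delta> * \<nu> * b) * ((a + b)^2 - 2 * \<delta> * \<nu> * b) = 0 \<longleftrightarrow>
    (A * A + B * B - 2 * d * n * B) * (A * A + B * B - 2 * d * n * B) = 4 * A * A * B * B"
proof -
  have "complex_of_real (((a - b)^2 - 2 * \<delta> * \<nu> * b) * ((a + b)^2 - 2 * \<delta> * \<nu> * b)) =
      (A * A + B * B - 2 * d * n * B) * (A * A + B * B - 2 * d * n * B) - 4 * A * A * B * B"
    unfolding assms by (simp add: power2_eq_square) algebra
  then show ?thesis by (metis eq_iff_diff_eq_0 of_real_eq_0_iff)
qed

theorem proposition2p4:
  fixes \<epsilon> \<delta> \<nu> a b :: real
  assumes "\<epsilon> = 1" and "\<delta> = 1 \<or> \<delta> = -1" and "\<nu> = 0 \<or> \<nu> = 1" and "a > 0" and "b \<noteq> 0"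
  shows "let dg = struct_eq \<epsilon> \<delta> \<nu> a b;
             \<Theta> = ((a - b)^2 - 2 * \<delta> * \<nu> * b) * ((a + b)^2 - 2 * \<delta> * \<nu> * b)
         in Epage_eq dg 1 2 0 2 \<and>
            Epage_spanned dg 1 0 2 [w2 4 5, w2 4 6, w2 5 7, w2 6 7] \<and>
            Epage_spanned dg 2 0 2 [w2 4 5, w2 4 6, w2 5 7, w2 6 7] \<and>
            (\<not> Epage_eq dg 2 3 0 2 \<longleftrightarrow> \<Theta> \<noteq> 0) \<and>
            (\<Theta> \<noteq> 0 \<longrightarrow> (\<forall>r\<ge>3. Epage_spanned dg r 0 2 [w2 4 5, w2 4 6, w2 5 7]))"
proof -
  define d n A B where "d = complex_of_real \<delta>" and "n = complex_of_real \<nu>"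
    and "A = complex_of_real a" and "B = complex_of_real b"
  define G where "G = model_dg d n A B"
  have dg: "struct_eq \<epsilon> \<delta> \<nu> a b = G"
    using assms(1) struct_eq_eq_model_dg by (simp add: G_def d_def n_def A_def B_def)
  have d: "d * d = 1" and A: "A \<noteq> 0" and B: "B \<noteq> 0"
    using assms(2,4,5) by (auto simp: d_def A_def B_def)
  have \<Theta>: "((a - b)^2 - 2 * \<delta> * \<nu> * b) * ((a + b)^2 - 2 * \<delta> * \<nu> * b) = 0 \<longleftrightarrow>
      (A * A + B * B - 2 * d * n * B) * (A * A + B * B - 2 * d * n * B) = 4 * A * A * B * B"
    using d_def n_def A_def B_def by (rule Theta_eq_0_iff)
  have Br: "Br G r 0 2 = Br G 1 0 2" if "1 \<le> r" for r
    using that by (simp add: Br_bidegree_0)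
  have "Epage_eq G 1 2 0 2"
    unfolding Epage_eq_def using Zr_2_eq_Zr_1_model[OF d A B, where n = n, folded G_def] Br[of 2] by simp
  moreover have "Epage_spanned G r 0 2 [w2 4 5, w2 4 6, w2 5 7, w2 6 7]" if "r = 1 \<or> r = 2" for r
    using Epage_spanned_model_1_2[OF d A B that, where n = n, folded G_def] .
  moreover have "\<not> Epage_eq G 2 3 0 2 \<longleftrightarrow> ((a - b)^2 - 2 * \<delta> * \<nu> * b) * ((a + b)^2 - 2 * \<delta> * \<nu> * b) \<noteq> 0"
    unfolding Epage_eq_def using Zr_3_eq_Zr_2_model_iff[OF d A B, where n = n, folded G_def] \<Theta> Br[of 2] Br[of 3] by auto
  moreover have "\<forall>r\<ge>3. Epage_spanned G r 0 2 [w2 4 5, w2 4 6, w2 5 7]"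
    if "((a - b)^2 - 2 * \<delta> * \<nu> * b) * ((a + b)^2 - 2 * \<delta> * \<nu> * b) \<noteq> 0"
    using Epage_spanned_model_ge_3[OF d A B, where n = n, folded G_def] \<Theta> that by blast
  ultimately show ?thesis
    unfolding Let_def dg by blast
qed

end
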